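(* Let $(\mathsf K,\mathsf D)$ be a differential ring, $n\ge2$, $L=\sum_{k=0}^n\binom nk a_k\mathsf D^{n-k}$ with $a_0=1$, with gauge–Wilczynski covariants $I_2(L),\dots,I_n(L)$, and set $I_0=1$, $I_1=0$. Let $u\in\mathsf K$ be arbitrary and define $$L^{\star_u}:=\sum_{m=0}^n\binom nm I_m(L)\,\bigl(\mathsf D+(a_1-u)\bigr)^{n-m}=\sum_{k=0}^n\binom nk a_k^{\star_u}\mathsf D^{n-k}.$$ Then for $k=0,1,\dots,n$, $$a_k^{\star_u}=\sum_{m=0}^k\binom km I_m(L)\,P_{k-m}(a_1-u)=\sum_{m=0}^k\binom km\Bigl(\sum_{j=0}^m\binom mj a_{m-j}Q_j(-a_1)\Bigr)P_{k-m}(a_1-u).$$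
   Context: $(\mathsf K,\mathsf D)$: unital associative (possibly noncommutative) ring with derivation; $\mathsf K\langle\mathsf D\rangle$: Ore algebra, $\mathsf D a=a\mathsf D+\mathsf D(a)$. The covariants $I_k(L)$ are the unique elements with $L=\nabla^n+\sum_{k=2}^n\binom nk I_k(L)\nabla^{n-k}$, $\nabla=\mathsf D+a_1$. Bell polynomials: $P_0(v)=1$, $P_{m+1}(v)=\mathsf D(P_m(v))+vP_m(v)$; with $\Delta_{a_1}(b)=\mathsf D(b)+a_1b-ba_1$, $Q_0(v)=1$, $Q_{m+1}(v)=\Delta_{a_1}(Q_m(v))+vQ_m(v)$. *)

theory Defs
  imports Main
begin

definition is_derivation :: "('a::ring_1 \<Rightarrow> 'a) \<Rightarrow> bool" where
  "is_derivation D \<longleftrightarrow> (\<forall>x y. D (x + y) = D x + D y) \<and> (\<forall>x y. D (x * y) = D x * y + x * D y)"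

text \<open>Elements of the Ore algebra K<D> are written uniquely as sum c_i D^i (coefficients
  on the left); we represent such an operator by its coefficient function
  (i maps to the coefficient of D^i).\<close>

definition op_one :: "nat \<Rightarrow> 'a::ring_1" where
  "op_one = (\<lambda>i. if i = 0 then 1 else 0)"

text \<open>Left multiplication by D + b in the Ore algebra, using D c = c D + D(c):
  (D + b) (c D^i) = c D^(i+1) + (D(c) + b c) D^i.\<close>
definition op_lmul_shift :: "('a::ring_1 \<Rightarrow> 'a) \<Rightarrow> 'a \<Rightarrow> (nat \<Rightarrow> 'a) \<Rightarrow> (nat \<Rightarrow> 'a)" where
  "op_lmul_shift D b p = (\<lambda>i. D (p i) + b * p i + (if i = 0 then 0 else p (i - 1)))"

definition shift_pow :: "('a::ring_1 \<Rightarrow> 'a) \<Rightarrow> 'a \<Rightarrow> nat \<Rightarrow> (nat \<Rightarrow> 'a)" where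
  "shift_pow D b m = (op_lmul_shift D b ^^ m) op_one"

fun bellP :: "('a::ring_1 \<Rightarrow> 'a) \<Rightarrow> 'a \<Rightarrow> nat \<Rightarrow> 'a" where
  "bellP D v 0 = 1"
| "bellP D v (Suc m) = D (bellP D v m) + v * bellP D v m"

definition Delta :: "('a::ring_1 \<Rightarrow> 'a) \<Rightarrow> 'a \<Rightarrow> 'a \<Rightarrow> 'a" where
  "Delta D c b = D b + c * b - b * c"

fun bellQ :: "('a::ring_1 \<Rightarrow> 'a) \<Rightarrow> 'a \<Rightarrow> 'a \<Rightarrow> nat \<Rightarrow> 'a" where
  "bellQ D c v 0 = 1"
| "bellQ D c v (Suc m) = Delta D c (bellQ D c v m) + v * bellQ D c v m"

definition opL :: "nat \<Rightarrow> (nat \<Rightarrow> 'a::ring_1) \<Rightarrow> nat \<Rightarrow> 'a" where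
  "opL n a = (\<lambda>i. \<Sum>k\<le>n. if n - k = i then of_nat (n choose k) * a k else 0)"

end

theory Submission
  imports Defs
begin

text \<open>
  Write \<open>X \<star> Y\<close> for the binomial convolution \<open>binom_conv X Y k = \<Sum>m\<le>k. (k choose m) X m Y (k - m)\<close>,
  the coefficient sequence of a product of exponential generating functions, and \<open>P(c)\<close>, \<open>Q(c)\<close>
  for the sequences \<open>m \<mapsto> P_m(c)\<close>, \<open>m \<mapsto> Q_m(c)\<close>. Comparing the coefficients of \<open>D^(n - k)\<close> by
  means of \<open>(D + b)^N = \<Sum>i\<le>N. (N choose i) P_(N - i)(b) D^i\<close> turns the two operator identities into
  \<open>a = I \<star> P(a 1)\<close> and \<open>astar = I \<star> P(a 1 - u)\<close>. The product \<open>\<star>\<close> is associative, and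
  \<open>Q(- a 1) \<star> P(a 1)\<close> is its unit, being the Leibniz expansion of \<open>D^s 1\<close> along the splitting
  \<open>D (x y) = (D x - x a 1) y + x (D y + a 1 y)\<close>. Hence \<open>(a \<star> Q(- a 1)) \<star> P(a 1) = a = I \<star> P(a 1)\<close>,
  and cancelling the unitriangular factor \<open>P(a 1)\<close> gives \<open>I = a \<star> Q(- a 1)\<close>.
\<close>

lemma mult_of_nat_left_commute: "x * (of_nat n * y) = of_nat n * (x * (y :: 'a::ring_1))"
  by (metis mult.assoc mult_of_nat_commute)

definition binom_conv :: "(nat \<Rightarrow> 'a::ring_1) \<Rightarrow> (nat \<Rightarrow> 'a) \<Rightarrow> nat \<Rightarrow> 'a" where
  "binom_conv X Y k = (\<Sum>m\<le>k. of_nat (k choose m) * X m * Y (k - m))"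

lemma binom_conv_reflect:
  "binom_conv X Y k = (\<Sum>j\<le>k. of_nat (k choose j) * X (k - j) * Y j)"
proof -
  have "binom_conv X Y k = (\<Sum>j\<le>k. of_nat (k choose (k - j)) * X (k - j) * Y (k - (k - j)))"
    unfolding binom_conv_def
    by (rule sum.reindex_bij_witness[of _ "\<lambda>j. k - j" "\<lambda>j. k - j"]) auto
  also have "\<dots> = (\<Sum>j\<le>k. of_nat (k choose j) * X (k - j) * Y j)"
    by (intro sum.cong refl) (auto simp: binomial_symmetric[symmetric])
  finally show ?thesis .
qed

lemma binom_conv_delta_right: "binom_conv X (\<lambda>k. if k = 0 then 1 else 0) k = X k"
proof -
  have "binom_conv X (\<lambda>k. if k = 0 then 1 else 0) k = (\<Sum>m\<le>k. if m = k then X m else 0)"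
    unfolding binom_conv_def by (intro sum.cong refl) auto
  then show ?thesis by simp
qed

lemma binom_conv_assoc:
  "binom_conv (binom_conv X Y) Z k = binom_conv X (binom_conv Y Z) k"
proof -
  define F where "F j l = of_nat ((k choose (j + l)) * ((j + l) choose j)) * (X j * Y l * Z (k - (j + l)))"
    for j l
  have "binom_conv (binom_conv X Y) Z k = (\<Sum>m\<le>k. \<Sum>j\<le>m. F j (m - j))"
    unfolding binom_conv_def sum_distrib_left sum_distrib_right
    by (intro sum.cong refl) (auto simp: F_def mult.assoc)
  also have "\<dots> = (\<Sum>(j, l) \<in> {(j, l). j + l \<le> k}. F j l)"
    by (rule sum.triangle_reindex_eq[symmetric])
  also have "\<dots> = (\<Sum>j\<le>k. \<Sum>l\<le>k - j. F j l)"
    by (simp add: sum.Sigma) (rule sum.cong; auto)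
  also have "\<dots> = binom_conv X (binom_conv Y Z) k"
    unfolding binom_conv_def sum_distrib_left
  proof (intro sum.cong refl)
    fix j l assume "j \<in> {..k}" "l \<in> {..k - j}"
    then have "(k choose (j + l)) * ((j + l) choose j) = (k choose j) * ((k - j) choose l)"
      by (simp add: choose_mult)
    then show "F j l = of_nat (k choose j) * X j * (of_nat (k - j choose l) * Y l * Z (k - j - l))"
      by (simp add: F_def mult.assoc mult_of_nat_left_commute[of "X j"])
  qed
  finally show ?thesis .
qed

lemma binom_conv_Suc:
  "binom_conv U V (Suc s) = binom_conv (\<lambda>j. U (Suc j)) V s + binom_conv U (\<lambda>j. V (Suc j)) s"
proof -
  have shifted: "binom_conv U (\<lambda>j. V (Suc j)) s
      = U 0 * V (Suc s) + (\<Sum>j<s. of_nat (s choose Suc j) * U (Suc j) * V (s - j))"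
    unfolding binom_conv_def
    by (simp only: lessThan_Suc_atMost[symmetric] sum.lessThan_Suc_shift)
      (auto intro!: sum.cong simp: Suc_diff_Suc)
  have top: "(\<Sum>j\<le>s. of_nat (s choose Suc j) * U (Suc j) * V (s - j))
      = (\<Sum>j<s. of_nat (s choose Suc j) * U (Suc j) * V (s - j))"
    by (simp add: lessThan_Suc_atMost[symmetric] binomial_eq_0)
  have "binom_conv U V (Suc s)
      = U 0 * V (Suc s) + (\<Sum>j\<le>s. of_nat (Suc s choose Suc j) * U (Suc j) * V (s - j))"
    unfolding binom_conv_def by (simp only: sum.atMost_Suc_shift) simp
  also have "\<dots> = U 0 * V (Suc s) + binom_conv (\<lambda>j. U (Suc j)) V s
      + (\<Sum>j\<le>s. of_nat (s choose Suc j) * U (Suc j) * V (s - j))"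
    by (simp add: binom_conv_def sum.distrib distrib_right add.assoc)
  finally show ?thesis
    using shifted top by (simp add: algebra_simps)
qed

lemma binom_conv_right_cancel:
  assumes "Y 0 = 1" and "\<forall>k\<le>n. binom_conv X Y k = binom_conv X' Y k" and "k \<le> n"
  shows "X k = X' k"
  using \<open>k \<le> n\<close>
proof (induction k rule: less_induct)
  case (less k)
  have split: "binom_conv V Y k = V k + (\<Sum>m<k. of_nat (k choose m) * V m * Y (k - m))" for V
    using assms(1) by (simp add: binom_conv_def lessThan_Suc_atMost[symmetric])
  have "(\<Sum>m<k. of_nat (k choose m) * X m * Y (k - m)) = (\<Sum>m<k. of_nat (k choose m) * X' m * Y (k - m))"
    using less by (intro sum.cong refl) auto
  then show ?case
    using assms(2) less.prems split[of X] split[of X'] by auto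
qed

lemma opL_coeff:
  assumes "k \<le> n"
  shows "opL n a (n - k) = of_nat (n choose k) * a k"
proof -
  have "opL n a (n - k) = (\<Sum>j\<le>n. if j = k then of_nat (n choose j) * a j else 0)"
    unfolding opL_def using assms by (intro sum.cong refl) auto
  then show ?thesis
    using assms by simp
qed

locale derivation =
  fixes D :: "'a::ring_1 \<Rightarrow> 'a"
  assumes is_derivation: "is_derivation D"
begin

lemma add: "D (x + y) = D x + D y"
  using is_derivation unfolding is_derivation_def by blast

lemma mult: "D (x * y) = D x * y + x * D y"
  using is_derivation unfolding is_derivation_def by blast

lemma zero [simp]: "D 0 = 0"
  using add[of 0 0] by simp

lemma one [simp]: "D 1 = 0"
  using mult[of 1 1] by simp

lemma sum: "D (sum f A) = (\<Sum>x\<in>A. D (f x))"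
  by (induction A rule: infinite_finite_induct) (auto simp: add)

lemma of_nat_mult: "D (of_nat c * x) = of_nat c * D x"
  using sum[of "\<lambda>_. x" "{..<c}"] by simp

lemma twisted_leibniz:
  assumes "\<And>x y. D (x * y) = S x * y + x * T y"
  shows "(D ^^ s) (x * y) = binom_conv (\<lambda>j. (S ^^ j) x) (\<lambda>j. (T ^^ j) y) s"
proof (induction s)
  case 0
  show ?case by (simp add: binom_conv_def)
next
  case (Suc s)
  have "(D ^^ Suc s) (x * y)
      = (\<Sum>m\<le>s. of_nat (s choose m) * ((S ^^ Suc m) x * (T ^^ (s - m)) y
          + (S ^^ m) x * (T ^^ Suc (s - m)) y))"
    by (simp only: funpow.simps comp_apply Suc binom_conv_def sum of_nat_mult mult.assoc)
      (simp add: assms)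
  also have "\<dots> = binom_conv (\<lambda>j. (S ^^ Suc j) x) (\<lambda>j. (T ^^ j) y) s
      + binom_conv (\<lambda>j. (S ^^ j) x) (\<lambda>j. (T ^^ Suc j) y) s"
    by (simp add: binom_conv_def sum.distrib distrib_left mult.assoc)
  also have "\<dots> = binom_conv (\<lambda>j. (S ^^ j) x) (\<lambda>j. (T ^^ j) y) (Suc s)"
    by (rule binom_conv_Suc[symmetric])
  finally show ?case .
qed

lemma bellP_eq_funpow: "bellP D v m = ((\<lambda>y. D y + v * y) ^^ m) 1"
  by (induction m) auto

lemma bellQ_eq_funpow: "bellQ D c (- c) m = ((\<lambda>x. D x - x * c) ^^ m) 1"
  by (induction m) (auto simp: Delta_def)

lemma binom_conv_bellQ_bellP:
  "binom_conv (bellQ D c (- c)) (bellP D c) = (\<lambda>s. if s = 0 then 1 else 0)"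
proof
  fix s
  have "(D ^^ s) (1 * 1) = binom_conv (bellQ D c (- c)) (bellP D c) s"
    unfolding bellP_eq_funpow bellQ_eq_funpow
    by (rule twisted_leibniz) (simp add: mult algebra_simps)
  moreover have "(D ^^ s) 1 = (if s = 0 then 1 else 0)"
    by (induction s) auto
  ultimately show "binom_conv (bellQ D c (- c)) (bellP D c) s = (if s = 0 then 1 else 0)"
    by simp
qed

lemma bellP_convolution_inverse:
  assumes "\<forall>k\<le>n. binom_conv I (bellP D c) k = a k" and "k \<le> n"
  shows "I k = binom_conv a (bellQ D c (- c)) k"
proof (rule binom_conv_right_cancel[of "bellP D c" n])
  show "\<forall>k\<le>n. binom_conv I (bellP D c) k = binom_conv (binom_conv a (bellQ D c (- c))) (bellP D c) k"
    using assms(1) by (simp add: binom_conv_assoc binom_conv_bellQ_bellP binom_conv_delta_right)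
qed (use assms(2) in simp_all)

lemma shift_pow_coeff:
  "shift_pow D b N i = (if i \<le> N then of_nat (N choose i) * bellP D b (N - i) else 0)"
proof (induction N arbitrary: i)
  case 0
  show ?case by (simp add: shift_pow_def op_one_def)
next
  case (Suc N)
  have step: "shift_pow D b (Suc N) = op_lmul_shift D b (shift_pow D b N)"
    by (simp add: shift_pow_def)
  show ?case
  proof (cases i)
    case 0
    then show ?thesis by (simp add: step op_lmul_shift_def Suc.IH)
  next
    case (Suc j)
    show ?thesis
    proof (cases "j < N")
      case True
      define m where "m = N - i"
      have m: "N - i = m" "N - j = Suc m" "Suc N - i = Suc m"
        using Suc True m_def by auto
      have "shift_pow D b (Suc N) i = of_nat (N choose i) * (D (bellP D b m) + b * bellP D b m)
          + of_nat (N choose j) * bellP D b (Suc m)"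
        using Suc True m by (simp add: step op_lmul_shift_def Suc.IH of_nat_mult distrib_left
            mult_of_nat_left_commute[of b])
      also have "\<dots> = of_nat (Suc N choose i) * bellP D b (Suc m)"
        using Suc by (simp add: distrib_right)
      finally show ?thesis
        using Suc True m by simp
    next
      case False
      then show ?thesis
        using Suc by (simp add: step op_lmul_shift_def Suc.IH)
    qed
  qed
qed

lemma shift_pow_combination_coeff:
  assumes "k \<le> n"
  shows "(\<Sum>m\<le>n. of_nat (n choose m) * X m * shift_pow D b (n - m) (n - k))
       = of_nat (n choose k) * binom_conv X (bellP D b) k"
proof -
  have "(\<Sum>m\<le>n. of_nat (n choose m) * X m * shift_pow D b (n - m) (n - k))
      = (\<Sum>m\<le>n. if m \<le> k then of_nat (n choose k) * (of_nat (k choose m) * X m * bellP D b (k - m))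
          else 0)"
  proof (intro sum.cong refl)
    fix m assume "m \<in> {..n}"
    show "of_nat (n choose m) * X m * shift_pow D b (n - m) (n - k)
      = (if m \<le> k then of_nat (n choose k) * (of_nat (k choose m) * X m * bellP D b (k - m)) else 0)"
    proof (cases "m \<le> k")
      case True
      have "n - k \<le> n - m" "n - m - (n - k) = k - m"
        using True assms by auto
      then have "of_nat (n choose m) * X m * shift_pow D b (n - m) (n - k)
          = of_nat ((n choose m) * ((n - m) choose (n - k))) * (X m * bellP D b (k - m))"
        by (simp add: shift_pow_coeff mult.assoc mult_of_nat_left_commute[of "X m"])
      also have "(n choose m) * ((n - m) choose (n - k)) = (n choose k) * (k choose m)"
        using True assms choose_mult[of m k n] binomial_symmetric[of "k - m" "n - m"] by simp
      finally show ?thesis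
        using True by (simp add: mult.assoc)
    next
      case False
      moreover have "\<not> n - k \<le> n - m"
        using False assms \<open>m \<in> {..n}\<close> by auto
      ultimately show ?thesis
        by (simp add: shift_pow_coeff)
    qed
  qed
  also have "\<dots> = of_nat (n choose k) * binom_conv X (bellP D b) k"
  proof -
    have "{..n} \<inter> {m. m \<le> k} = {..k}"
      using assms by auto
    then show ?thesis
      by (simp add: sum.If_cases binom_conv_def sum_distrib_left)
  qed
  finally show ?thesis .
qed

lemma opL_shift_expansion_coeff:
  assumes binom_reg: "\<forall>k\<le>n. \<forall>x::'a. of_nat (n choose k) * x = 0 \<longrightarrow> x = 0"
    and expansion: "\<forall>i. (\<Sum>m\<le>n. of_nat (n choose m) * X m * shift_pow D b (n - m) i) = opL n Y i"
    and "k \<le> n"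
  shows "Y k = binom_conv X (bellP D b) k"
proof -
  have "of_nat (n choose k) * (Y k - binom_conv X (bellP D b) k) = 0"
    using expansion[rule_format, of "n - k"] shift_pow_combination_coeff[OF \<open>k \<le> n\<close>]
      opL_coeff[OF \<open>k \<le> n\<close>, of Y]
    by (simp add: right_diff_distrib)
  then have "Y k - binom_conv X (bellP D b) k = 0"
    using binom_reg \<open>k \<le> n\<close> by blast
  then show ?thesis
    by simp
qed

end

theorem mainTheorem8:
  fixes D :: "'a::ring_1 \<Rightarrow> 'a" and n :: nat and a I astar :: "nat \<Rightarrow> 'a" and u :: 'a
  assumes deriv: "is_derivation D"
    and n2: "n \<ge> 2"
    and a0: "a 0 = 1"
    and binom_reg: "\<forall>k\<le>n. \<forall>x::'a. of_nat (n choose k) * x = 0 \<longrightarrow> x = 0"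
    and I0: "I 0 = 1" and I1: "I 1 = 0"
    and I_def: "\<forall>i. opL n a i = shift_pow D (a 1) n i
                  + (\<Sum>k=2..n. of_nat (n choose k) * I k * shift_pow D (a 1) (n - k) i)"
    and astar_def: "\<forall>i. (\<Sum>m\<le>n. of_nat (n choose m) * I m * shift_pow D (a 1 - u) (n - m) i)
                      = opL n astar i"
  shows "\<forall>k\<le>n.
           astar k = (\<Sum>m\<le>k. of_nat (k choose m) * I m * bellP D (a 1 - u) (k - m))
         \<and> astar k = (\<Sum>m\<le>k. of_nat (k choose m)
                        * (\<Sum>j\<le>m. of_nat (m choose j) * a (m - j) * bellQ D (a 1) (- a 1) j)
                        * bellP D (a 1 - u) (k - m))"
proof -
  interpret derivation D
    using deriv by (rule derivation.intro)
  have "{..n} = {0, 1} \<union> {2..n}"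
    using n2 by auto
  then have "\<forall>i. (\<Sum>m\<le>n. of_nat (n choose m) * I m * shift_pow D (a 1) (n - m) i) = opL n a i"
    using I_def I0 I1 by (simp add: sum.union_disjoint)
  from opL_shift_expansion_coeff[OF binom_reg this]
  have "\<forall>k\<le>n. binom_conv I (bellP D (a 1)) k = a k"
    by simp
  from bellP_convolution_inverse[OF this]
  have I_eq: "\<forall>m\<le>n. I m = (\<Sum>j\<le>m. of_nat (m choose j) * a (m - j) * bellQ D (a 1) (- a 1) j)"
    by (simp add: binom_conv_reflect)
  have "\<forall>k\<le>n. astar k = binom_conv I (bellP D (a 1 - u)) k"
    using opL_shift_expansion_coeff[OF binom_reg astar_def] by blast
  then show ?thesis
    using I_eq unfolding binom_conv_def by (auto intro!: sum.cong)
qed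

end
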